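(* Let $f_1$ and $g_1$ be smooth functions of one variable and consider the equation $$m_t+u_xf_1(u^2-u_x^2)\,m+\Big(\big(uf_1(u^2-u_x^2)+g_1(u^2-u_x^2)\big)m\Big)_x=0,\qquad m=u-u_{xx}.$$ No smooth solitary travelling wave solutions of this equation exist with arbitrary wave speed: for every constant $c\neq0$ with $c\neq g_1(0)$ there is no smooth solitary travelling wave solution with speed $c$. In particular, if $g_1(0)=0$, no smooth solitary travelling wave solutions exist (neither with arbitrary nor with a fixed wave speed).
   Context: A smooth solitary travelling wave solution with speed $c\neq0$ is a solution of the form $u=U(\xi)$, $\xi=x-ct$, with $U$ smooth and not identically zero, such that $U$ and its derivatives tend to zero as $|\xi|\to\infty$. *)

theory Defs
  imports "HOL-Analysis.Analysis"
begin

definition smooth :: "(real \<Rightarrow> real) \<Rightarrow> bool" where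
  "smooth f \<longleftrightarrow> (\<forall>n x. (deriv ^^ n) f differentiable (at x))"

definition solitary_profile :: "(real \<Rightarrow> real) \<Rightarrow> bool" where
  "solitary_profile U \<longleftrightarrow> smooth U \<and> (\<exists>\<xi>. U \<xi> \<noteq> 0) \<and>
     (\<forall>n. ((deriv ^^ n) U \<longlongrightarrow> 0) at_top \<and> ((deriv ^^ n) U \<longlongrightarrow> 0) at_bot)"

definition pdx :: "(real \<Rightarrow> real \<Rightarrow> real) \<Rightarrow> real \<Rightarrow> real \<Rightarrow> real" where
  "pdx w t x = deriv (\<lambda>y. w t y) x"

definition pdt :: "(real \<Rightarrow> real \<Rightarrow> real) \<Rightarrow> real \<Rightarrow> real \<Rightarrow> real" where
  "pdt w t x = deriv (\<lambda>s. w s x) t"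

definition solves_eq :: "(real \<Rightarrow> real) \<Rightarrow> (real \<Rightarrow> real) \<Rightarrow> (real \<Rightarrow> real \<Rightarrow> real) \<Rightarrow> bool" where
  "solves_eq f1 g1 u \<longleftrightarrow>
    (let m = (\<lambda>t x. u t x - pdx (pdx u) t x);
         Q = (\<lambda>t x. (u t x)\<^sup>2 - (pdx u t x)\<^sup>2)
     in \<forall>t x. pdt m t x + pdx u t x * f1 (Q t x) * m t x
              + pdx (\<lambda>t x. (u t x * f1 (Q t x) + g1 (Q t x)) * m t x) t x = 0)"

end

theory Submission
  imports Defs
begin

text \<open>
  Write the travelling wave as \<open>u = U(x - c t)\<close> and put \<open>m = U - U''\<close>, \<open>Q = U\<^sup>2 - U'\<^sup>2\<close>.
  Since \<open>Q' = 2 U' m\<close>, the term \<open>U' f\<^sub>1(Q) m\<close> is the derivative of \<open>F(Q)/2\<close> with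
  \<open>F' = f\<^sub>1\<close>, \<open>F(0) = 0\<close>, so the equation integrates (using the decay at \<open>-\<infinity>\<close>) to
  \<open>(U f\<^sub>1(Q) + g\<^sub>1(Q) - c) m + F(Q)/2 = 0\<close>, and this in turn gives the second first integral
  \<open>U F(Q) + G(Q) = c Q\<close> with \<open>G' = g\<^sub>1\<close>, \<open>G(0) = 0\<close>.
  Where \<open>Q \<noteq> 0\<close> the latter reads \<open>U F(Q)/Q + G(Q)/Q = c\<close>, and as \<open>Q \<rightarrow> 0\<close> the two
  quotients tend to \<open>f\<^sub>1(0)\<close> and \<open>g\<^sub>1(0)\<close>. As \<open>U \<rightarrow> 0\<close> at \<open>-\<infinity>\<close> and \<open>c \<noteq> g\<^sub>1(0)\<close>, \<open>Q\<close>
  vanishes near \<open>-\<infinity>\<close>; it does not vanish everywhere, because \<open>Q = U\<^sup>2 > 0\<close> at an extremum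
  of \<open>U\<close>. At the left end \<open>\<alpha>\<close> of the support of \<open>Q\<close> we get \<open>U(\<alpha>) f\<^sub>1(0) + g\<^sub>1(0) = c\<close>,
  hence \<open>U(\<alpha>) \<noteq> 0\<close>, hence \<open>U'(\<alpha>) \<noteq> 0\<close>, and \<open>Q'(\<alpha>) = 2 U'(\<alpha>) m(\<alpha>) = 0\<close> forces \<open>m(\<alpha>) = 0\<close>.
  Near \<open>\<alpha>\<close> the first integral then gives \<open>F(Q)/Q = O(m) \<rightarrow> 0\<close>, i.e. \<open>f\<^sub>1(0) = 0\<close>,
  which contradicts \<open>U(\<alpha>) f\<^sub>1(0) = c - g\<^sub>1(0) \<noteq> 0\<close>.
\<close>

lemma smooth_deriv: "smooth f \<Longrightarrow> smooth (deriv f)"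
  unfolding smooth_def by (metis funpow_Suc_right comp_apply)

lemma smooth_has_real_derivative:
  "smooth f \<Longrightarrow> (f has_real_derivative deriv f x) (at x)"
  unfolding smooth_def by (metis DERIV_deriv_iff_real_differentiable funpow_0)

lemma smooth_differentiable: "smooth f \<Longrightarrow> f differentiable (at x)"
  unfolding smooth_def by (metis funpow_0)

lemma pdx_travelling_wave:
  assumes "\<And>\<xi>. V differentiable (at \<xi>)"
  shows "pdx (\<lambda>t x. V (x - c * t)) t x = deriv V (x - c * t)"
proof -
  have "((\<lambda>y. V (y - c * t)) has_real_derivative deriv V (x - c * t) * 1) (at x)"
    using assms by (intro DERIV_chain2[of V])
      (auto intro!: derivative_eq_intros simp: DERIV_deriv_iff_real_differentiable)
  then show ?thesis unfolding pdx_def by (simp add: DERIV_imp_deriv)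
qed

lemma pdt_travelling_wave:
  assumes "\<And>\<xi>. V differentiable (at \<xi>)"
  shows "pdt (\<lambda>t x. V (x - c * t)) t x = - c * deriv V (x - c * t)"
proof -
  have "((\<lambda>s. V (x - c * s)) has_real_derivative deriv V (x - c * t) * - c) (at t)"
    using assms by (intro DERIV_chain2[of V])
      (auto intro!: derivative_eq_intros simp: DERIV_deriv_iff_real_differentiable)
  then show ?thesis unfolding pdt_def by (simp add: DERIV_imp_deriv mult.commute)
qed

lemma exists_antiderivative_vanishing_at_0:
  fixes f :: "real \<Rightarrow> real"
  assumes "\<And>x. isCont f x"
  obtains F where "F 0 = 0" "\<And>x. (F has_real_derivative f x) (at x)"
proof -
  obtain F where F: "\<And>x. (F has_vector_derivative f x) (at x)"
    using einterval_antiderivative[of "-\<infinity>" "\<infinity>" f] assms by auto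
  show thesis
    by (rule that[of "\<lambda>x. F x - F 0"])
      (use F in \<open>auto simp: has_real_derivative_iff_has_vector_derivative intro!: derivative_eq_intros\<close>)
qed

lemma antiderivative_linearization_bound:
  fixes f F :: "real \<Rightarrow> real"
  assumes F: "\<And>x. (F has_real_derivative f x) (at x)" and "F 0 = 0"
    and f: "\<And>x. (f has_real_derivative f' x) (at x)" and "isCont f' 0"
  shows "\<exists>B. \<forall>\<^sub>F y in at 0. \<bar>y * f y - F y\<bar> \<le> B * y\<^sup>2"
proof -
  define B where "B = \<bar>f' 0\<bar> + 1"
  obtain d where "d > 0" and near: "\<And>x. \<bar>x\<bar> < d \<Longrightarrow> \<bar>f' x - f' 0\<bar> < 1"
    using \<open>isCont f' 0\<close> unfolding continuous_at_eps_delta dist_real_def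
    by (metis diff_zero zero_less_one)
  have d: "\<bar>f' x\<bar> \<le> B" if "\<bar>x\<bar> < d" for x
    using near[OF that] unfolding B_def by linarith
  have lipschitz: "\<bar>f x - f y\<bar> \<le> B * \<bar>x - y\<bar>" if "\<bar>x\<bar> < d" "\<bar>y\<bar> < d" for x y
    using field_differentiable_bound[of "ball 0 d" f f' B x y] that d has_field_derivative_at_within[OF f]
    by auto
  have "\<bar>y * f y - F y\<bar> \<le> B * y\<^sup>2" if "\<bar>y\<bar> < d" for y
  proof -
    let ?S = "closed_segment 0 y"
    have S: "\<bar>z\<bar> < d" "\<bar>z - y\<bar> \<le> \<bar>y\<bar>" if "z \<in> ?S" for z
      using that \<open>\<bar>y\<bar> < d\<close> by (auto simp: closed_segment_eq_real_ivl split: if_splits)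
    have "\<bar>(F y - y * f y) - (F 0 - 0 * f y)\<bar> \<le> (B * \<bar>y\<bar>) * \<bar>y - 0\<bar>"
    proof (rule field_differentiable_bound[of ?S "\<lambda>z. F z - z * f y" "\<lambda>z. f z - f y", simplified])
      show "((\<lambda>z. F z - z * f y) has_real_derivative f z - f y) (at z within ?S)" for z
        by (auto intro!: derivative_eq_intros DERIV_subset[OF F])
      show "\<bar>f z - f y\<bar> \<le> B * \<bar>y\<bar>" if "z \<in> ?S" for z
        using lipschitz[of z y] S[OF that] \<open>\<bar>y\<bar> < d\<close> mult_left_mono[of "\<bar>z - y\<bar>" "\<bar>y\<bar>" B]
        unfolding B_def by linarith
    qed auto
    then show ?thesis using \<open>F 0 = 0\<close> by (simp add: abs_minus_commute power2_eq_square algebra_simps)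
  qed
  then show ?thesis using \<open>d > 0\<close>
    by (intro exI[of _ B]) (auto simp: eventually_at dist_real_def)
qed

lemma tendsto_difference_quotient_compose:
  fixes q :: "'a \<Rightarrow> real" and F :: "real \<Rightarrow> real"
  assumes "(F has_real_derivative D) (at 0)" "F 0 = 0"
    and "(q \<longlongrightarrow> 0) L" "\<forall>\<^sub>F x in L. q x \<noteq> 0"
  shows "((\<lambda>x. F (q x) / q x) \<longlongrightarrow> D) L"
proof -
  have "((\<lambda>y. F y / y) \<longlongrightarrow> D) (at 0)"
    using assms(1,2) by (simp add: DERIV_def)
  moreover have "filterlim q (at 0) L"
    using assms(3,4) by (simp add: filterlim_at)
  ultimately show ?thesis by (rule filterlim_compose)
qed

lemma zero_derivative_vanishing_at_bot:
  fixes E :: "real \<Rightarrow> real"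
  assumes "\<And>x. (E has_real_derivative 0) (at x)" "(E \<longlongrightarrow> 0) at_bot"
  shows "E x = 0"
proof -
  have "\<forall>\<^sub>F y in at_bot. E y = E x"
    using DERIV_isconst_all assms(1) by (blast intro: always_eventually)
  then have "(E \<longlongrightarrow> E x) at_bot"
    by (rule tendsto_eventually)
  then show ?thesis
    using assms(2) tendsto_unique[OF trivial_limit_at_bot_linorder] by blast
qed

lemma DERIV_zero_at_end_of_zero_interval:
  fixes q :: "real \<Rightarrow> real"
  assumes "(q has_real_derivative D) (at a)" "\<And>t. t \<le> a \<Longrightarrow> q t = 0"
  shows "D = 0"
proof (rule has_field_derivative_unique)
  show "(q has_real_derivative D) (at_left a)"
    using assms(1) by (rule has_field_derivative_at_within)
  have "\<forall>\<^sub>F t in at_left a. 0 = q t"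
    using assms(2) by (auto simp: eventually_at_filter)
  then show "(q has_real_derivative 0) (at_left a)"
    using has_field_derivative_cong_eventually[of "\<lambda>_. 0" q a "{..<a}" 0] assms(2)[of a] by simp
qed (rule trivial_limit_at_left_real)

lemma exists_nonzero_critical_point:
  fixes U U' :: "real \<Rightarrow> real"
  assumes U: "\<And>x. (U has_real_derivative U' x) (at x)"
    and "(U \<longlongrightarrow> 0) at_top" "(U \<longlongrightarrow> 0) at_bot" "U x0 \<noteq> 0"
  shows "\<exists>p. U' p = 0 \<and> U p \<noteq> 0"
proof -
  define W where "W x = (U x)\<^sup>2" for x
  have "W x0 > 0"
    using \<open>U x0 \<noteq> 0\<close> by (simp add: W_def)
  have "(W \<longlongrightarrow> 0) at_top" "(W \<longlongrightarrow> 0) at_bot"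
    unfolding W_def using assms(2,3) by (auto intro: tendsto_eq_intros)
  then have "\<forall>\<^sub>F x in at_top. W x < W x0" "\<forall>\<^sub>F x in at_bot. W x < W x0"
    using \<open>W x0 > 0\<close> by (auto intro: order_tendstoD)
  then obtain a b where small: "\<And>x. x \<le> a \<or> b \<le> x \<Longrightarrow> W x < W x0"
    unfolding eventually_at_top_linorder eventually_at_bot_linorder by blast
  then have "a < x0" "x0 < b"
    using small[of x0] by force+
  have dW: "(W has_real_derivative 2 * U x * U' x) (at x)" for x
    unfolding W_def by (auto intro!: derivative_eq_intros U)
  have "continuous_on {a..b} W"
    using dW by (intro continuous_at_imp_continuous_on ballI DERIV_isCont) auto
  then obtain p where p: "p \<in> {a..b}" and max: "\<And>x. x \<in> {a..b} \<Longrightarrow> W x \<le> W p"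
    using continuous_attains_sup[of "{a..b}" W] \<open>a < x0\<close> \<open>x0 < b\<close> by auto
  have "W x0 \<le> W p"
    using max \<open>a < x0\<close> \<open>x0 < b\<close> by auto
  then have "a < p" "p < b"
    using p small[of p] by fastforce+
  have "2 * U p * U' p = 0"
    by (rule DERIV_local_max[OF dW, where d = "min (p - a) (b - p)"])
      (use \<open>a < p\<close> \<open>p < b\<close> max in \<open>auto simp: abs_if\<close>)
  moreover have "U p \<noteq> 0"
    using \<open>W x0 \<le> W p\<close> \<open>W x0 > 0\<close> by (auto simp: W_def)
  ultimately show ?thesis by auto
qed

lemma open_Inf_islimpt:
  fixes S :: "real set"
  assumes "open S" "S \<noteq> {}" "bdd_below S"
  shows "Inf S \<notin> S" "Inf S islimpt S"
proof -
  obtain x where "\<And>a. a \<in> S \<Longrightarrow> x \<le> a"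
    using \<open>bdd_below S\<close> by (auto simp: bdd_below_def)
  then show "Inf S \<notin> S"
    using Inf_notin_open[OF \<open>open S\<close>, of "x - 1"] by fastforce
  then show "Inf S islimpt S"
    using closure_contains_Inf[OF \<open>S \<noteq> {}\<close> \<open>bdd_below S\<close>] by (simp add: islimpt_in_closure)
qed

locale solitary_wave =
  fixes f1 g1 F G U :: "real \<Rightarrow> real" and c :: real
  assumes smooth_f1: "smooth f1" and smooth_g1: "smooth g1"
    and F: "\<And>y. (F has_real_derivative f1 y) (at y)" "F 0 = 0"
    and G: "\<And>y. (G has_real_derivative g1 y) (at y)" "G 0 = 0"
    and profile: "solitary_profile U"
    and solves: "solves_eq f1 g1 (\<lambda>t x. U (x - c * t))"
begin

definition m :: "real \<Rightarrow> real" where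
  "m \<xi> = U \<xi> - deriv (deriv U) \<xi>"

definition Q :: "real \<Rightarrow> real" where
  "Q \<xi> = (U \<xi>)\<^sup>2 - (deriv U \<xi>)\<^sup>2"

lemma smooth_U: "smooth U" "smooth (deriv U)" "smooth (deriv (deriv U))"
  using profile by (auto simp: solitary_profile_def intro: smooth_deriv)

lemma U_has_derivative:
  "(U has_real_derivative deriv U \<xi>) (at \<xi>)"
  "(deriv U has_real_derivative deriv (deriv U) \<xi>) (at \<xi>)"
  using smooth_U by (auto intro: smooth_has_real_derivative)

lemma isCont_U: "isCont U \<xi>" "isCont (deriv U) \<xi>" "isCont (deriv (deriv U)) \<xi>"
  using smooth_U by (auto intro: DERIV_isCont smooth_has_real_derivative)

lemma isCont_coefficients: "isCont f1 y" "isCont g1 y" "isCont F y" "isCont G y"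
  using smooth_f1 smooth_g1 F G by (auto intro: DERIV_isCont smooth_has_real_derivative)

lemma Q_has_derivative: "(Q has_real_derivative 2 * deriv U \<xi> * m \<xi>) (at \<xi>)"
  unfolding Q_def[abs_def] m_def
  by (auto intro!: derivative_eq_intros U_has_derivative simp: algebra_simps)

lemma U_tendsto_0: "(U \<longlongrightarrow> 0) at_top" "(U \<longlongrightarrow> 0) at_bot"
  using profile unfolding solitary_profile_def by (metis funpow_0)+

lemma Q_tendsto_0_at_bot: "(Q \<longlongrightarrow> 0) at_bot"
  and m_tendsto_0_at_bot: "(m \<longlongrightarrow> 0) at_bot"
proof -
  have "((deriv ^^ 1) U \<longlongrightarrow> 0) at_bot" "((deriv ^^ 2) U \<longlongrightarrow> 0) at_bot"
    using profile unfolding solitary_profile_def by blast+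
  then have "(deriv U \<longlongrightarrow> 0) at_bot" "(deriv (deriv U) \<longlongrightarrow> 0) at_bot"
    by (simp_all add: numeral_2_eq_2)
  then show "(Q \<longlongrightarrow> 0) at_bot" "(m \<longlongrightarrow> 0) at_bot"
    unfolding Q_def[abs_def] m_def[abs_def] using U_tendsto_0
    by (auto intro!: tendsto_eq_intros)
qed

lemma conservation_law:
  "((\<lambda>\<xi>. (U \<xi> * f1 (Q \<xi>) + g1 (Q \<xi>) - c) * m \<xi>) has_real_derivative
     - deriv U \<xi> * f1 (Q \<xi>) * m \<xi>) (at \<xi>)"
proof -
  define K where "K \<xi> = (U \<xi> * f1 (Q \<xi>) + g1 (Q \<xi>)) * m \<xi>" for \<xi>
  have diff_U: "U differentiable (at \<xi>)" "deriv U differentiable (at \<xi>)"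
    "deriv (deriv U) differentiable (at \<xi>)" for \<xi>
    using smooth_U by (auto intro: smooth_differentiable)
  have diff_m: "m differentiable (at \<xi>)" for \<xi>
    unfolding m_def[abs_def] using diff_U by auto
  have diff_Q: "Q differentiable (at \<xi>)" for \<xi>
    using Q_has_derivative real_differentiable_def by blast
  have diff_K: "K differentiable (at \<xi>)" for \<xi>
  proof -
    have "(\<lambda>\<xi>. f1 (Q \<xi>)) differentiable (at \<xi>)" "(\<lambda>\<xi>. g1 (Q \<xi>)) differentiable (at \<xi>)"
      using smooth_f1 smooth_g1 diff_Q by (auto intro: differentiable_compose smooth_differentiable)
    then show ?thesis
      unfolding K_def using diff_U diff_m by (intro differentiable_mult differentiable_add)
  qed
  have u_x: "pdx (\<lambda>t x. U (x - c * t)) = (\<lambda>t x. deriv U (x - c * t))"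
    and u_xx: "pdx (\<lambda>t x. deriv U (x - c * t)) = (\<lambda>t x. deriv (deriv U) (x - c * t))"
    using diff_U by (auto intro!: ext pdx_travelling_wave)
  have pde: "\<forall>t x. pdt (\<lambda>t x. m (x - c * t)) t x
      + deriv U (x - c * t) * f1 (Q (x - c * t)) * m (x - c * t)
      + pdx (\<lambda>t x. K (x - c * t)) t x = 0"
    using solves[unfolded solves_eq_def Let_def u_x u_xx, folded m_def Q_def, folded K_def] .
  have ode: "- c * deriv m \<xi> + deriv U \<xi> * f1 (Q \<xi>) * m \<xi> + deriv K \<xi> = 0"
    using pde[rule_format, of 0 \<xi>] pdt_travelling_wave[OF diff_m, of c 0 \<xi>]
      pdx_travelling_wave[OF diff_K, of c 0 \<xi>] by simp
  have "((\<lambda>\<xi>. K \<xi> - c * m \<xi>) has_real_derivative deriv K \<xi> - c * deriv m \<xi>) (at \<xi>)"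
    using diff_K diff_m
    by (intro DERIV_diff DERIV_cmult) (simp_all add: DERIV_deriv_iff_real_differentiable)
  then have "((\<lambda>\<xi>. K \<xi> - c * m \<xi>) has_real_derivative - deriv U \<xi> * f1 (Q \<xi>) * m \<xi>) (at \<xi>)"
    by (rule DERIV_cong) (use ode in linarith)
  moreover have "(\<lambda>\<xi>. K \<xi> - c * m \<xi>) = (\<lambda>\<xi>. (U \<xi> * f1 (Q \<xi>) + g1 (Q \<xi>) - c) * m \<xi>)"
    by (simp add: K_def fun_eq_iff algebra_simps)
  ultimately show ?thesis
    by simp
qed

lemma first_integral_m: "(U \<xi> * f1 (Q \<xi>) + g1 (Q \<xi>) - c) * m \<xi> + F (Q \<xi>) / 2 = 0"
proof -
  define E where "E \<xi> = (U \<xi> * f1 (Q \<xi>) + g1 (Q \<xi>) - c) * m \<xi> + F (Q \<xi>) / 2" for \<xi>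
  have "E \<xi> = 0"
  proof (rule zero_derivative_vanishing_at_bot[of E])
    fix \<xi>
    have "((\<lambda>\<xi>. F (Q \<xi>) / 2) has_real_derivative f1 (Q \<xi>) * (2 * deriv U \<xi> * m \<xi>) / 2) (at \<xi>)"
      by (intro DERIV_chain2[OF F(1) Q_has_derivative] DERIV_cdivide)
    from DERIV_add[OF conservation_law this]
    show "(E has_real_derivative 0) (at \<xi>)"
      unfolding E_def[abs_def] by simp
  next
    have "(E \<longlongrightarrow> (0 * f1 0 + g1 0 - c) * 0 + F 0 / 2) at_bot"
      unfolding E_def[abs_def]
      using U_tendsto_0 Q_tendsto_0_at_bot m_tendsto_0_at_bot isCont_coefficients
      by (intro tendsto_intros isCont_tendsto_compose[where g = f1]
          isCont_tendsto_compose[where g = g1] isCont_tendsto_compose[where g = F]) auto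
    then show "(E \<longlongrightarrow> 0) at_bot"
      using F(2) by simp
  qed
  then show ?thesis
    by (simp add: E_def)
qed

lemma first_integral_Q: "U \<xi> * F (Q \<xi>) + G (Q \<xi>) = c * Q \<xi>"
proof -
  define \<Phi> where "\<Phi> \<xi> = U \<xi> * F (Q \<xi>) + G (Q \<xi>) - c * Q \<xi>" for \<xi>
  have "\<Phi> \<xi> = 0"
  proof (rule zero_derivative_vanishing_at_bot[of \<Phi>])
    fix \<xi>
    have "(\<Phi> has_real_derivative
        deriv U \<xi> * (F (Q \<xi>) + 2 * ((U \<xi> * f1 (Q \<xi>) + g1 (Q \<xi>) - c) * m \<xi>))) (at \<xi>)"
      unfolding \<Phi>_def[abs_def]
      by (auto intro!: derivative_eq_intros DERIV_chain2[OF F(1)] DERIV_chain2[OF G(1)]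
          U_has_derivative Q_has_derivative simp: algebra_simps)
    then show "(\<Phi> has_real_derivative 0) (at \<xi>)"
      by (rule DERIV_cong) (use first_integral_m[of \<xi>] in simp)
  next
    have "(\<Phi> \<longlongrightarrow> 0 * F 0 + G 0 - c * 0) at_bot"
      unfolding \<Phi>_def[abs_def] using U_tendsto_0 Q_tendsto_0_at_bot isCont_coefficients
      by (intro tendsto_intros isCont_tendsto_compose[where g = F]
          isCont_tendsto_compose[where g = G]) auto
    then show "(\<Phi> \<longlongrightarrow> 0) at_bot"
      using G(2) by simp
  qed
  then show ?thesis
    by (simp add: \<Phi>_def)
qed

lemma Q_not_identically_zero: "\<exists>\<xi>. Q \<xi> \<noteq> 0"
proof -
  obtain \<xi>\<^sub>0 where "U \<xi>\<^sub>0 \<noteq> 0"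
    using profile by (auto simp: solitary_profile_def)
  then obtain p where "deriv U p = 0" "U p \<noteq> 0"
    using exists_nonzero_critical_point[OF U_has_derivative(1) U_tendsto_0] by blast
  then have "Q p \<noteq> 0"
    by (simp add: Q_def)
  then show ?thesis ..
qed

lemma limit_relation_on_support:
  assumes "L \<noteq> bot" "(Q \<longlongrightarrow> 0) L" "(U \<longlongrightarrow> u) L" "\<forall>\<^sub>F \<xi> in L. Q \<xi> \<noteq> 0"
  shows "u * f1 0 + g1 0 = c"
proof -
  have "((\<lambda>\<xi>. U \<xi> * (F (Q \<xi>) / Q \<xi>) + G (Q \<xi>) / Q \<xi>) \<longlongrightarrow> u * f1 0 + g1 0) L"
    using assms(2-4) F G by (intro tendsto_intros tendsto_difference_quotient_compose) auto
  moreover have "\<forall>\<^sub>F \<xi> in L. U \<xi> * (F (Q \<xi>) / Q \<xi>) + G (Q \<xi>) / Q \<xi> = c"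
    using assms(4) by eventually_elim (use first_integral_Q in \<open>simp add: field_simps\<close>)
  then have "((\<lambda>\<xi>. U \<xi> * (F (Q \<xi>) / Q \<xi>) + G (Q \<xi>) / Q \<xi>) \<longlongrightarrow> c) L"
    by (rule tendsto_eventually)
  ultimately show ?thesis
    using tendsto_unique[OF assms(1)] by blast
qed

lemma quotient_bound_on_support:
  assumes "Q \<xi> \<noteq> 0"
    and "\<bar>Q \<xi> * f1 (Q \<xi>) - F (Q \<xi>)\<bar> \<le> Bf * (Q \<xi>)\<^sup>2"
    and "\<bar>Q \<xi> * g1 (Q \<xi>) - G (Q \<xi>)\<bar> \<le> Bg * (Q \<xi>)\<^sup>2"
  shows "\<bar>F (Q \<xi>) / Q \<xi>\<bar> \<le> 2 * (\<bar>U \<xi>\<bar> * \<bar>Bf\<bar> + \<bar>Bg\<bar>) * \<bar>m \<xi>\<bar>"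
proof -
  define y where "y = Q \<xi>"
  define h where "h = U \<xi> * f1 y + g1 y - c"
  have "y * h = U \<xi> * (y * f1 y - F y) + (y * g1 y - G y)"
    using first_integral_Q[of \<xi>] by (simp add: h_def y_def algebra_simps)
  have f1_bound: "\<bar>y * f1 y - F y\<bar> \<le> \<bar>Bf\<bar> * y\<^sup>2"
    using assms(2) unfolding y_def[symmetric]
    by (meson abs_ge_self mult_right_mono order_trans zero_le_power2)
  have g1_bound: "\<bar>y * g1 y - G y\<bar> \<le> \<bar>Bg\<bar> * y\<^sup>2"
    using assms(3) unfolding y_def[symmetric]
    by (meson abs_ge_self mult_right_mono order_trans zero_le_power2)
  have "\<bar>y * h\<bar> \<le> \<bar>U \<xi>\<bar> * \<bar>y * f1 y - F y\<bar> + \<bar>y * g1 y - G y\<bar>"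
    unfolding \<open>y * h = _\<close> by (metis abs_mult abs_triangle_ineq)
  also have "\<dots> \<le> \<bar>U \<xi>\<bar> * (\<bar>Bf\<bar> * y\<^sup>2) + \<bar>Bg\<bar> * y\<^sup>2"
    by (intro add_mono mult_left_mono f1_bound g1_bound) auto
  finally have yh_bound: "\<bar>y * h\<bar> \<le> (\<bar>U \<xi>\<bar> * \<bar>Bf\<bar> + \<bar>Bg\<bar>) * y\<^sup>2"
    by (simp add: algebra_simps)
  have "F y = - 2 * (h * m \<xi>)"
    using first_integral_m[of \<xi>] by (simp add: h_def y_def algebra_simps)
  then have "\<bar>F y / y\<bar> * y\<^sup>2 = 2 * \<bar>y * h\<bar> * \<bar>m \<xi>\<bar>"
    using assms(1) by (simp add: y_def abs_mult power2_eq_square field_simps)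
  also have "\<dots> \<le> 2 * ((\<bar>U \<xi>\<bar> * \<bar>Bf\<bar> + \<bar>Bg\<bar>) * y\<^sup>2) * \<bar>m \<xi>\<bar>"
    by (intro mult_left_mono mult_right_mono yh_bound) auto
  finally have "\<bar>F y / y\<bar> * y\<^sup>2 \<le> (2 * (\<bar>U \<xi>\<bar> * \<bar>Bf\<bar> + \<bar>Bg\<bar>) * \<bar>m \<xi>\<bar>) * y\<^sup>2"
    by (simp add: algebra_simps)
  moreover have "y\<^sup>2 > 0"
    using assms(1) by (simp add: y_def)
  ultimately show ?thesis
    unfolding y_def by (metis mult_le_cancel_right_pos)
qed

lemma f1_0_eq_0_on_support:
  assumes "L \<noteq> bot" "(Q \<longlongrightarrow> 0) L" "(U \<longlongrightarrow> u) L" "(m \<longlongrightarrow> 0) L"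
    and "\<forall>\<^sub>F \<xi> in L. Q \<xi> \<noteq> 0"
  shows "f1 0 = 0"
proof -
  have "isCont (deriv f1) 0" "isCont (deriv g1) 0"
    using smooth_f1 smooth_g1 by (auto intro: DERIV_isCont smooth_has_real_derivative smooth_deriv)
  then obtain Bf Bg where "\<forall>\<^sub>F y in at 0. \<bar>y * f1 y - F y\<bar> \<le> Bf * y\<^sup>2"
    and "\<forall>\<^sub>F y in at 0. \<bar>y * g1 y - G y\<bar> \<le> Bg * y\<^sup>2"
    using antiderivative_linearization_bound[OF F smooth_has_real_derivative[OF smooth_f1]]
      antiderivative_linearization_bound[OF G smooth_has_real_derivative[OF smooth_g1]] by blast
  moreover have "filterlim Q (at 0) L"
    using assms(2,5) by (simp add: filterlim_at)
  ultimately have "\<forall>\<^sub>F \<xi> in L. \<bar>Q \<xi> * f1 (Q \<xi>) - F (Q \<xi>)\<bar> \<le> Bf * (Q \<xi>)\<^sup>2"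
      "\<forall>\<^sub>F \<xi> in L. \<bar>Q \<xi> * g1 (Q \<xi>) - G (Q \<xi>)\<bar> \<le> Bg * (Q \<xi>)\<^sup>2"
    by (auto intro: eventually_compose_filterlim)
  with assms(5)
  have "\<forall>\<^sub>F \<xi> in L. \<bar>F (Q \<xi>) / Q \<xi>\<bar> \<le> 2 * (\<bar>U \<xi>\<bar> * \<bar>Bf\<bar> + \<bar>Bg\<bar>) * \<bar>m \<xi>\<bar>"
    by eventually_elim (rule quotient_bound_on_support)
  moreover have "((\<lambda>\<xi>. 2 * (\<bar>U \<xi>\<bar> * \<bar>Bf\<bar> + \<bar>Bg\<bar>) * \<bar>m \<xi>\<bar>)
      \<longlongrightarrow> 2 * (\<bar>u\<bar> * \<bar>Bf\<bar> + \<bar>Bg\<bar>) * \<bar>0\<bar>) L"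
    using assms(3,4) by (intro tendsto_intros)
  ultimately have "((\<lambda>\<xi>. F (Q \<xi>) / Q \<xi>) \<longlongrightarrow> 0) L"
    using Lim_null_comparison[where f = "\<lambda>\<xi>. F (Q \<xi>) / Q \<xi>" and net = L
        and g = "\<lambda>\<xi>. 2 * (\<bar>U \<xi>\<bar> * \<bar>Bf\<bar> + \<bar>Bg\<bar>) * \<bar>m \<xi>\<bar>"] by simp
  moreover have "((\<lambda>\<xi>. F (Q \<xi>) / Q \<xi>) \<longlongrightarrow> f1 0) L"
    using F assms(2,5) by (rule tendsto_difference_quotient_compose)
  ultimately show ?thesis
    using tendsto_unique[OF assms(1)] by blast
qed

lemma Q_eventually_zero_at_bot:
  assumes "c \<noteq> g1 0"
  shows "\<forall>\<^sub>F \<xi> in at_bot. Q \<xi> = 0"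
proof (rule ccontr)
  define L where "L = inf at_bot (principal {\<xi>. Q \<xi> \<noteq> 0})"
  assume "\<not> (\<forall>\<^sub>F \<xi> in at_bot. Q \<xi> = 0)"
  then have "L \<noteq> bot"
    unfolding L_def by (simp add: eventually_False[symmetric] eventually_inf_principal)
  moreover have "(Q \<longlongrightarrow> 0) L" "(U \<longlongrightarrow> 0) L"
    unfolding L_def using Q_tendsto_0_at_bot U_tendsto_0 by (auto intro: tendsto_mono[OF inf_le1])
  moreover have "\<forall>\<^sub>F \<xi> in L. Q \<xi> \<noteq> 0"
    unfolding L_def by (simp add: eventually_inf_principal)
  ultimately have "0 * f1 0 + g1 0 = c"
    by (rule limit_relation_on_support)
  with assms show False
    by simp
qed

lemma speed_eq_g1_0: "c = g1 0"
proof (rule ccontr)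
  assume "c \<noteq> g1 0"
  define S where "S = {\<xi>. Q \<xi> \<noteq> 0}"
  define \<alpha> where "\<alpha> = Inf S"
  have isCont_Q: "isCont Q \<xi>" and isCont_m: "isCont m \<xi>" for \<xi>
    using Q_has_derivative isCont_U unfolding m_def[abs_def] by (auto intro: DERIV_isCont)
  have "open S"
    unfolding S_def using isCont_Q by (intro open_Collect_neq continuous_at_imp_continuous_on) auto
  moreover have "S \<noteq> {}"
    using Q_not_identically_zero by (auto simp: S_def)
  moreover have "bdd_below S"
  proof -
    obtain R where R: "\<And>\<xi>. \<xi> \<le> R \<Longrightarrow> Q \<xi> = 0"
      using Q_eventually_zero_at_bot[OF \<open>c \<noteq> g1 0\<close>] by (auto simp: eventually_at_bot_linorder)
    show ?thesis
    proof (rule bdd_belowI)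
      fix \<xi>
      assume "\<xi> \<in> S"
      then show "R \<le> \<xi>"
        using R[of \<xi>] by (cases "\<xi> \<le> R") (auto simp: S_def)
    qed
  qed
  ultimately have "\<alpha> \<notin> S" "\<alpha> islimpt S" "\<And>\<xi>. \<xi> < \<alpha> \<Longrightarrow> \<xi> \<notin> S"
    unfolding \<alpha>_def using open_Inf_islimpt cInf_lower by (blast, blast, force)
  then have Q_left: "Q \<xi> = 0" if "\<xi> \<le> \<alpha>" for \<xi>
    using that by (cases "\<xi> = \<alpha>") (auto simp: S_def)
  define L where "L = at \<alpha> within S"
  have "L \<noteq> bot"
    unfolding L_def using \<open>\<alpha> islimpt S\<close> by (simp add: trivial_limit_within)
  have tendsto_L: "(f \<longlongrightarrow> f \<alpha>) L" if "isCont f \<alpha>" for f :: "real \<Rightarrow> real"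
    using that unfolding L_def isCont_def by (rule tendsto_within_subset) simp
  have Q_ne_L: "\<forall>\<^sub>F \<xi> in L. Q \<xi> \<noteq> 0"
    unfolding L_def S_def by (simp add: eventually_at_filter)
  have "U \<alpha> * f1 0 + g1 0 = c"
    using limit_relation_on_support[OF \<open>L \<noteq> bot\<close> _ tendsto_L[OF isCont_U(1)] Q_ne_L]
      tendsto_L[OF isCont_Q] Q_left[of \<alpha>] by simp
  with \<open>c \<noteq> g1 0\<close> have "U \<alpha> \<noteq> 0" "f1 0 \<noteq> 0"
    by auto
  then have "deriv U \<alpha> \<noteq> 0"
    using Q_left[of \<alpha>] by (auto simp: Q_def)
  moreover have "2 * deriv U \<alpha> * m \<alpha> = 0"
    using Q_has_derivative Q_left by (rule DERIV_zero_at_end_of_zero_interval)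
  ultimately have "m \<alpha> = 0"
    by simp
  then have "f1 0 = 0"
    using f1_0_eq_0_on_support[OF \<open>L \<noteq> bot\<close> _ tendsto_L[OF isCont_U(1)] _ Q_ne_L]
      tendsto_L[OF isCont_Q] tendsto_L[OF isCont_m] Q_left[of \<alpha>] by simp
  with \<open>f1 0 \<noteq> 0\<close> show False ..
qed

end

theorem proposition1:
  fixes f1 g1 :: "real \<Rightarrow> real" and c :: real
  assumes "smooth f1" and "smooth g1"
    and "c \<noteq> 0" and "c \<noteq> g1 0"
  shows "\<not> (\<exists>U. solitary_profile U \<and> solves_eq f1 g1 (\<lambda>t x. U (x - c * t)))"
proof
  assume "\<exists>U. solitary_profile U \<and> solves_eq f1 g1 (\<lambda>t x. U (x - c * t))"
  then obtain U where "solitary_profile U" "solves_eq f1 g1 (\<lambda>t x. U (x - c * t))"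
    by blast
  have "isCont f1 y" "isCont g1 y" for y
    using assms(1,2) by (auto intro: DERIV_isCont smooth_has_real_derivative)
  then obtain F G where "\<And>y. (F has_real_derivative f1 y) (at y)" "F 0 = 0"
    and "\<And>y. (G has_real_derivative g1 y) (at y)" "G 0 = 0"
    by (metis exists_antiderivative_vanishing_at_0)
  then interpret solitary_wave f1 g1 F G U c
    using assms(1,2) \<open>solitary_profile U\<close> \<open>solves_eq f1 g1 _\<close> by unfold_locales
  show False
    using speed_eq_g1_0 assms(4) by simp
qed

end
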